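(* Let $P,Q\in\Gamma_n$ and $0<r\le R$ with $r\le p_i/q_i\le R$ for all $i$. Let $s,t\in\mathbb{R}$ with $0\le s\le4$. If $t\ge s$ and $t(4-s)\ge6s-s^2-4$, then $$\Big(\frac{r+1}{2r}\Big)^{s-t-1}\frac{(4-s)r+s}{r}\,\Omega_t(P\|Q)\le\zeta_s(Q\|P)\le\Big(\frac{R+1}{2R}\Big)^{s-t-1}\frac{(4-s)R+s}{R}\,\Omega_t(P\|Q).$$ If $t\le s$ and $t(4-s)\le6s-s^2-4$, then $$\Big(\frac{R+1}{2R}\Big)^{s-t-1}\frac{(4-s)R+s}{R}\,\Omega_t(P\|Q)\le\zeta_s(Q\|P)\le\Big(\frac{r+1}{2r}\Big)^{s-t-1}\frac{(4-s)r+s}{r}\,\Omega_t(P\|Q).$$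
   Context: $\Gamma_n=\{P=(p_1,\dots,p_n): p_i>0,\ \sum_i p_i=1\}$, $n\ge2$. For $P,Q\in\Gamma_n$ and $s\in\mathbb{R}$: $\Omega_s(P\|Q)=[s(s-1)]^{-1}\big[\sum_i p_i\big(\frac{p_i+q_i}{2p_i}\big)^s-1\big]$ for $s\ne0,1$; $\Omega_0(P\|Q)=\sum_i p_i\ln\frac{2p_i}{p_i+q_i}$; $\Omega_1(P\|Q)=\sum_i\frac{p_i+q_i}{2}\ln\frac{p_i+q_i}{2p_i}$. $\zeta_s(Q\|P)=(s-1)^{-1}\sum_i(q_i-p_i)\big(\frac{p_i+q_i}{2p_i}\big)^{s-1}$ for $s\ne1$; $\zeta_1(Q\|P)=\sum_i(q_i-p_i)\ln\frac{p_i+q_i}{2p_i}$. *)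

theory Defs
  imports Complex_Main
begin

definition Gamma :: "nat \<Rightarrow> (nat \<Rightarrow> real) set" where
  "Gamma n = {p. (\<forall>i<n. p i > 0) \<and> (\<Sum>i<n. p i) = 1}"

definition Omega :: "nat \<Rightarrow> real \<Rightarrow> (nat \<Rightarrow> real) \<Rightarrow> (nat \<Rightarrow> real) \<Rightarrow> real" where
  "Omega n s p q =
    (if s = 0 then (\<Sum>i<n. p i * ln (2 * p i / (p i + q i)))
     else if s = 1 then (\<Sum>i<n. (p i + q i) / 2 * ln ((p i + q i) / (2 * p i)))
     else (1 / (s * (s - 1))) * ((\<Sum>i<n. p i * ((p i + q i) / (2 * p i)) powr s) - 1))"

definition zeta :: "nat \<Rightarrow> real \<Rightarrow> (nat \<Rightarrow> real) \<Rightarrow> (nat \<Rightarrow> real) \<Rightarrow> real" where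
  "zeta n s q p =
    (if s = 1 then (\<Sum>i<n. (q i - p i) * ln ((p i + q i) / (2 * p i)))
     else (1 / (s - 1)) * (\<Sum>i<n. (q i - p i) * ((p i + q i) / (2 * p i)) powr (s - 1)))"

end

(*
  With w_i = (p_i + q_i) / (2 p_i), both divergences are p-averages of functions of one
  variable: Omega_t = sum p_i G_t(w_i) with G_t'' = w^(t-2) (omega_gen), and
  zeta_s = sum p_i F_s(w_i) with F_s(w) = 2 (w - 1) G_s'(w) (zeta_gen); the terms linear in
  w_i - 1 drop out because sum p_i (w_i - 1) = (sum q_i - sum p_i) / 2 = 0.  F_s and G_t
  vanish to first order at w = 1 and F_s'' = k G_t'' with k(w) = w^(s-t-1) (2sw + 4 - 2s)
  (curvature_ratio),
  so c G_t <= F_s <= C G_t on every interval around 1 on which c <= k <= C.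
  The ratio bounds confine w_i to [(R+1)/(2R), (r+1)/(2r)], where the endpoint values of k
  are the constants of the theorem.  The derivative of k has the sign of
  2 s (s - t) (w - 1/2) + 6s - s^2 - 4 - t(4 - s), so for s >= 0 each pair of conditions on t
  makes k monotone on w >= 1/2.
*)
theory Submission
  imports Defs
begin

definition omega_gen :: "real \<Rightarrow> real \<Rightarrow> real" where
  "omega_gen t w =
    (if t = 0 then w - 1 - ln w
     else if t = 1 then w * ln w - (w - 1)
     else (w powr t - 1 - t * (w - 1)) / (t * (t - 1)))"

definition omega_gen_deriv :: "real \<Rightarrow> real \<Rightarrow> real" where
  "omega_gen_deriv t w = (if t = 1 then ln w else (w powr (t - 1) - 1) / (t - 1))"

definition zeta_gen :: "real \<Rightarrow> real \<Rightarrow> real" where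
  "zeta_gen s w = 2 * (w - 1) * omega_gen_deriv s w"

definition zeta_gen_deriv :: "real \<Rightarrow> real \<Rightarrow> real" where
  "zeta_gen_deriv s w = 2 * omega_gen_deriv s w + 2 * (w - 1) * w powr (s - 2)"

definition curvature_ratio :: "real \<Rightarrow> real \<Rightarrow> real \<Rightarrow> real" where
  "curvature_ratio s t w = w powr (s - t - 1) * (2 * s * w + 4 - 2 * s)"

lemma omega_gen_1 [simp]: "omega_gen t 1 = 0"
  and omega_gen_deriv_1 [simp]: "omega_gen_deriv t 1 = 0"
  by (simp_all add: omega_gen_def omega_gen_deriv_def)

lemma zeta_gen_1 [simp]: "zeta_gen s 1 = 0"
  and zeta_gen_deriv_1 [simp]: "zeta_gen_deriv s 1 = 0"
  by (simp_all add: zeta_gen_def zeta_gen_deriv_def)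

lemma omega_gen_has_real_derivative:
  assumes "w > 0"
  shows "(omega_gen t has_real_derivative omega_gen_deriv t w) (at w)"
proof -
  consider "t = 0" | "t = 1" | "t \<noteq> 0" "t \<noteq> 1" by blast
  then show ?thesis
  proof cases
    case 1
    then show ?thesis
      using assms unfolding omega_gen_def[abs_def] omega_gen_deriv_def
      by (auto intro!: derivative_eq_intros simp: powr_minus field_simps)
  next
    case 2
    then show ?thesis
      using assms unfolding omega_gen_def[abs_def] omega_gen_deriv_def
      by (auto intro!: derivative_eq_intros)
  next
    case 3
    have "((\<lambda>w. (w powr t - 1 - t * (w - 1)) / (t * (t - 1))) has_real_derivative
        t * (w powr (t - 1) - 1) / (t * (t - 1))) (at w)"
      using assms by (auto intro!: DERIV_cdivide derivative_eq_intros simp: algebra_simps)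
    with 3 show ?thesis
      unfolding omega_gen_def[abs_def] omega_gen_deriv_def by simp
  qed
qed

lemma omega_gen_deriv_has_real_derivative:
  assumes "w > 0"
  shows "(omega_gen_deriv t has_real_derivative w powr (t - 2)) (at w)"
proof (cases "t = 1")
  case True
  then show ?thesis
    using assms unfolding omega_gen_deriv_def[abs_def]
    by (auto intro!: derivative_eq_intros simp: powr_minus field_simps)
next
  case False
  then have "t - 1 \<noteq> 0" by simp
  with False show ?thesis
    using assms unfolding omega_gen_deriv_def[abs_def]
    by (auto intro!: derivative_eq_intros)
qed

lemma zeta_gen_has_real_derivative:
  assumes "w > 0"
  shows "(zeta_gen s has_real_derivative zeta_gen_deriv s w) (at w)"
  using assms unfolding zeta_gen_def[abs_def] zeta_gen_deriv_def
  by (auto intro!: derivative_eq_intros omega_gen_deriv_has_real_derivative)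

lemma zeta_gen_deriv_has_real_derivative:
  assumes "w > 0"
  shows "(zeta_gen_deriv s has_real_derivative w powr (t - 2) * curvature_ratio s t w) (at w)"
proof -
  have "(zeta_gen_deriv s has_real_derivative
      2 * w powr (s - 2) + 2 * w powr (s - 2) + 2 * (w - 1) * ((s - 2) * w powr (s - 2 - 1))) (at w)"
    using assms unfolding zeta_gen_deriv_def[abs_def]
    by (auto intro!: derivative_eq_intros omega_gen_deriv_has_real_derivative)
  moreover have "w powr (s - 2) = w powr (s - 3) * w"
    using assms powr_add[of w "s - 3" 1] by simp
  moreover have "w powr (t - 2) * w powr (s - t - 1) = w powr (s - 3)"
    using assms by (simp flip: powr_add)
  ultimately show ?thesis
    unfolding curvature_ratio_def by (simp add: algebra_simps)
qed

lemma second_order_comparison: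
  fixes f g f' g' f'' g'' :: "real \<Rightarrow> real"
  assumes "x0 \<in> {a..b}" "x \<in> {a..b}"
    and "f x0 = g x0" "f' x0 = g' x0"
    and "\<And>y. y \<in> {a..b} \<Longrightarrow> (f has_real_derivative f' y) (at y)"
    and "\<And>y. y \<in> {a..b} \<Longrightarrow> (g has_real_derivative g' y) (at y)"
    and "\<And>y. y \<in> {a..b} \<Longrightarrow> (f' has_real_derivative f'' y) (at y)"
    and "\<And>y. y \<in> {a..b} \<Longrightarrow> (g' has_real_derivative g'' y) (at y)"
    and "\<And>y. y \<in> {a..b} \<Longrightarrow> f'' y \<le> g'' y"
  shows "f x \<le> g x"
proof -
  define h where "h y = g y - f y" for y
  define h' where "h' y = g' y - f' y" for y
  have h: "(h has_real_derivative h' y) (at y)" if "y \<in> {a..b}" for y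
    unfolding h_def[abs_def] h'_def using that assms(5,6) by (auto intro!: derivative_eq_intros)
  have h'_mono: "h' y \<le> h' z" if "y \<in> {a..b}" "z \<in> {a..b}" "y \<le> z" for y z
  proof (rule DERIV_nonneg_imp_nondecreasing[OF \<open>y \<le> z\<close>])
    fix u assume "y \<le> u" "u \<le> z"
    then have "u \<in> {a..b}" using that by auto
    then show "\<exists>d. (h' has_real_derivative d) (at u) \<and> d \<ge> 0"
      unfolding h'_def[abs_def] using assms(7-9)
      by (auto intro!: exI[of _ "g'' u - f'' u"] derivative_eq_intros)
  qed
  have "h' x0 = 0" "h x0 = 0" using assms(3,4) by (simp_all add: h_def h'_def)
  have "h x0 \<le> h x"
  proof (cases "x0 \<le> x")
    case True
    then show ?thesis
    proof (rule DERIV_nonneg_imp_nondecreasing)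
      fix u assume "x0 \<le> u" "u \<le> x"
      then have "u \<in> {a..b}" using assms(1,2) by auto
      then show "\<exists>d. (h has_real_derivative d) (at u) \<and> d \<ge> 0"
        using h h'_mono[of x0 u] \<open>h' x0 = 0\<close> \<open>x0 \<le> u\<close> assms(1) by (intro exI[of _ "h' u"]) auto
    qed
  next
    case False
    then show ?thesis
    proof (intro DERIV_nonpos_imp_nonincreasing[of x x0])
      fix u assume "x \<le> u" "u \<le> x0"
      then have "u \<in> {a..b}" using assms(1,2) by auto
      then show "\<exists>d. (h has_real_derivative d) (at u) \<and> d \<le> 0"
        using h h'_mono[of u x0] \<open>h' x0 = 0\<close> \<open>u \<le> x0\<close> assms(1) by (intro exI[of _ "h' u"]) auto
    qed simp
  qed
  with \<open>h x0 = 0\<close> show ?thesis by (simp add: h_def)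
qed

lemma omega_gen_le_zeta_gen:
  assumes "0 < a" "1 \<in> {a..b}" "w \<in> {a..b}"
    and "\<And>x. x \<in> {a..b} \<Longrightarrow> c \<le> curvature_ratio s t x"
  shows "c * omega_gen t w \<le> zeta_gen s w"
proof (rule second_order_comparison[OF assms(2,3),
    where f' = "\<lambda>y. c * omega_gen_deriv t y" and f'' = "\<lambda>y. c * y powr (t - 2)"
      and g = "zeta_gen s" and g' = "zeta_gen_deriv s"
      and g'' = "\<lambda>y. y powr (t - 2) * curvature_ratio s t y"])
  fix y :: real assume y: "y \<in> {a..b}"
  then have "y > 0" using assms(1) by simp
  then show "((\<lambda>w. c * omega_gen t w) has_real_derivative c * omega_gen_deriv t y) (at y)"
    and "((\<lambda>w. c * omega_gen_deriv t w) has_real_derivative c * y powr (t - 2)) (at y)"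
    by (auto intro!: derivative_eq_intros omega_gen_has_real_derivative
        omega_gen_deriv_has_real_derivative)
  show "(zeta_gen s has_real_derivative zeta_gen_deriv s y) (at y)"
    and "(zeta_gen_deriv s has_real_derivative y powr (t - 2) * curvature_ratio s t y) (at y)"
    using \<open>y > 0\<close> by (rule zeta_gen_has_real_derivative zeta_gen_deriv_has_real_derivative)+
  show "c * y powr (t - 2) \<le> y powr (t - 2) * curvature_ratio s t y"
    using mult_left_mono[OF assms(4)[OF y], of "y powr (t - 2)"] by (simp add: mult.commute)
qed simp_all

lemma zeta_gen_le_omega_gen:
  assumes "0 < a" "1 \<in> {a..b}" "w \<in> {a..b}"
    and "\<And>x. x \<in> {a..b} \<Longrightarrow> curvature_ratio s t x \<le> c"
  shows "zeta_gen s w \<le> c * omega_gen t w"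
proof (rule second_order_comparison[OF assms(2,3),
    where g' = "\<lambda>y. c * omega_gen_deriv t y" and g'' = "\<lambda>y. c * y powr (t - 2)"
      and f = "zeta_gen s" and f' = "zeta_gen_deriv s"
      and f'' = "\<lambda>y. y powr (t - 2) * curvature_ratio s t y"])
  fix y :: real assume y: "y \<in> {a..b}"
  then have "y > 0" using assms(1) by simp
  then show "((\<lambda>w. c * omega_gen t w) has_real_derivative c * omega_gen_deriv t y) (at y)"
    and "((\<lambda>w. c * omega_gen_deriv t w) has_real_derivative c * y powr (t - 2)) (at y)"
    by (auto intro!: derivative_eq_intros omega_gen_has_real_derivative
        omega_gen_deriv_has_real_derivative)
  show "(zeta_gen s has_real_derivative zeta_gen_deriv s y) (at y)"
    and "(zeta_gen_deriv s has_real_derivative y powr (t - 2) * curvature_ratio s t y) (at y)"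
    using \<open>y > 0\<close> by (rule zeta_gen_has_real_derivative zeta_gen_deriv_has_real_derivative)+
  show "y powr (t - 2) * curvature_ratio s t y \<le> c * y powr (t - 2)"
    using mult_left_mono[OF assms(4)[OF y], of "y powr (t - 2)"] by (simp add: mult.commute)
qed simp_all

lemma curvature_ratio_has_real_derivative:
  assumes "x > 0"
  shows "(curvature_ratio s t has_real_derivative
           x powr (s - t - 2) * (2 * (s - t) * s * (x - 1/2) + (6 * s - s^2 - 4 - t * (4 - s)))) (at x)"
proof -
  have "(curvature_ratio s t has_real_derivative
      (s - t - 1) * x powr (s - t - 1 - 1) * (2 * s * x + 4 - 2 * s) + x powr (s - t - 1) * (2 * s)) (at x)"
    unfolding curvature_ratio_def[abs_def] using assms by (auto intro!: derivative_eq_intros)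
  moreover have "x powr (s - t - 1) = x powr (s - t - 2) * x"
    using assms powr_add[of x "s - t - 2" 1] by simp
  ultimately show ?thesis by (simp add: algebra_simps power2_eq_square)
qed

lemma curvature_ratio_antimono:
  assumes "0 \<le> s" "s \<le> t" "6 * s - s^2 - 4 \<le> t * (4 - s)" "1/2 \<le> x" "x \<le> y"
  shows "curvature_ratio s t y \<le> curvature_ratio s t x"
proof (rule DERIV_nonpos_imp_nonincreasing[OF \<open>x \<le> y\<close>])
  fix z assume "x \<le> z" "z \<le> y"
  then have "z > 0" and "2 * (s - t) * s * (z - 1/2) \<le> 0"
    using assms by (auto intro!: mult_nonpos_nonneg)
  then have "z powr (s - t - 2) * (2 * (s - t) * s * (z - 1/2) + (6 * s - s^2 - 4 - t * (4 - s))) \<le> 0"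
    using assms(3) by (intro mult_nonneg_nonpos powr_ge_zero) linarith
  with curvature_ratio_has_real_derivative[OF \<open>z > 0\<close>]
  show "\<exists>d. (curvature_ratio s t has_real_derivative d) (at z) \<and> d \<le> 0" by blast
qed

lemma curvature_ratio_mono:
  assumes "0 \<le> s" "t \<le> s" "t * (4 - s) \<le> 6 * s - s^2 - 4" "1/2 \<le> x" "x \<le> y"
  shows "curvature_ratio s t x \<le> curvature_ratio s t y"
proof (rule DERIV_nonneg_imp_nondecreasing[OF \<open>x \<le> y\<close>])
  fix z assume "x \<le> z" "z \<le> y"
  then have "z > 0" and "2 * (s - t) * s * (z - 1/2) \<ge> 0"
    using assms by auto
  then have "z powr (s - t - 2) * (2 * (s - t) * s * (z - 1/2) + (6 * s - s^2 - 4 - t * (4 - s))) \<ge> 0"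
    using assms(3) by (intro mult_nonneg_nonneg powr_ge_zero) linarith
  with curvature_ratio_has_real_derivative[OF \<open>z > 0\<close>]
  show "\<exists>d. (curvature_ratio s t has_real_derivative d) (at z) \<and> d \<ge> 0" by blast
qed

lemma Gamma_ex_le:
  assumes "p \<in> Gamma n" "q \<in> Gamma n" "n > 0"
  shows "\<exists>i<n. p i \<le> q i"
proof (rule ccontr)
  assume "\<not> (\<exists>i<n. p i \<le> q i)"
  then have "(\<Sum>i<n. q i) < (\<Sum>i<n. p i)"
    using assms(3) by (intro sum_strict_mono) (auto simp: not_le)
  with assms(1,2) show False by (simp add: Gamma_def)
qed

lemma Omega_eq_sum_omega_gen:
  assumes "p \<in> Gamma n" "q \<in> Gamma n"
  shows "Omega n t p q = (\<Sum>i<n. p i * omega_gen t ((p i + q i) / (2 * p i)))"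
proof -
  define w where "w i = (p i + q i) / (2 * p i)" for i
  have pos: "p i > 0" "q i > 0" if "i < n" for i
    using that assms by (auto simp: Gamma_def)
  have lin: "p i * (w i - 1) = (q i - p i) / 2" if "i < n" for i
    using pos[OF that] by (simp add: w_def field_simps)
  have sum_lin: "(\<Sum>i<n. p i * (w i - 1)) = 0"
    using assms by (simp add: lin sum_divide_distrib[symmetric] sum_subtractf Gamma_def)
  have "\<exists>c. Omega n t p q = (\<Sum>i<n. p i * omega_gen t (w i) + c * (p i * (w i - 1)))"
  proof -
    consider "t = 0" | "t = 1" | "t \<noteq> 0" "t \<noteq> 1" by blast
    then show ?thesis
    proof cases
      case 1
      have summand: "p i * ln (2 * p i / (p i + q i)) = p i * omega_gen t (w i) + (- 1) * (p i * (w i - 1))"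
        if "i < n" for i
        using 1 pos[OF that] by (simp add: omega_gen_def w_def ln_div field_simps)
      have "Omega n t p q = (\<Sum>i<n. p i * ln (2 * p i / (p i + q i)))"
        using 1 by (simp add: Omega_def)
      also have "\<dots> = (\<Sum>i<n. p i * omega_gen t (w i) + (- 1) * (p i * (w i - 1)))"
        by (intro sum.cong refl summand) simp
      finally show ?thesis ..
    next
      case 2
      have summand: "(p i + q i) / 2 * ln ((p i + q i) / (2 * p i)) = p i * omega_gen t (w i) + 1 * (p i * (w i - 1))"
        if "i < n" for i
        using 2 pos[OF that] by (simp add: omega_gen_def w_def field_simps)
      have "Omega n t p q = (\<Sum>i<n. (p i + q i) / 2 * ln ((p i + q i) / (2 * p i)))"
        using 2 by (simp add: Omega_def)
      also have "\<dots> = (\<Sum>i<n. p i * omega_gen t (w i) + 1 * (p i * (w i - 1)))"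
        by (intro sum.cong refl summand) simp
      finally show ?thesis ..
    next
      case 3
      then have summand: "(p i * w i powr t - p i) / (t * (t - 1))
          = p i * omega_gen t (w i) + 1 / (t - 1) * (p i * (w i - 1))" for i
        by (simp add: omega_gen_def divide_simps) (simp add: algebra_simps)
      have "Omega n t p q = ((\<Sum>i<n. p i * w i powr t) - (\<Sum>i<n. p i)) / (t * (t - 1))"
        using 3 assms(1) by (simp add: Omega_def Gamma_def w_def)
      also have "\<dots> = (\<Sum>i<n. p i * omega_gen t (w i) + 1 / (t - 1) * (p i * (w i - 1)))"
        by (simp only: summand[symmetric] sum_divide_distrib[symmetric] sum_subtractf)
      finally show ?thesis ..
    qed
  qed
  then obtain c where "Omega n t p q = (\<Sum>i<n. p i * omega_gen t (w i) + c * (p i * (w i - 1)))" ..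
  also have "\<dots> = (\<Sum>i<n. p i * omega_gen t (w i))"
    by (simp add: sum.distrib sum_distrib_left[symmetric] sum_lin)
  finally show ?thesis by (simp add: w_def)
qed

lemma zeta_eq_sum_zeta_gen:
  assumes "p \<in> Gamma n" "q \<in> Gamma n"
  shows "zeta n s q p = (\<Sum>i<n. p i * zeta_gen s ((p i + q i) / (2 * p i)))"
proof -
  define w where "w i = (p i + q i) / (2 * p i)" for i
  have "zeta n s q p = (\<Sum>i<n. (q i - p i) * omega_gen_deriv s (w i))"
  proof (cases "s = 1")
    case True
    then show ?thesis by (simp add: zeta_def omega_gen_deriv_def w_def)
  next
    case False
    have "(\<Sum>i<n. q i - p i) = 0"
      using assms by (simp add: sum_subtractf Gamma_def)
    with False show ?thesis
      by (simp add: zeta_def omega_gen_deriv_def w_def sum_divide_distrib[symmetric]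
          right_diff_distrib sum_subtractf)
  qed
  also have "\<dots> = (\<Sum>i<n. p i * zeta_gen s (w i))"
  proof (intro sum.cong refl)
    fix i assume "i \<in> {..<n}"
    then have "p i > 0" using assms(1) by (simp add: Gamma_def)
    then show "(q i - p i) * omega_gen_deriv s (w i) = p i * zeta_gen s (w i)"
      by (simp add: zeta_gen_def w_def field_simps)
  qed
  finally show ?thesis by (simp add: w_def)
qed

lemma scaled_Omega_bounds_zeta:
  assumes "p \<in> Gamma n" "q \<in> Gamma n" "0 < a" "1 \<in> {a..b}"
    and "\<And>i. i < n \<Longrightarrow> (p i + q i) / (2 * p i) \<in> {a..b}"
    and "\<And>x. x \<in> {a..b} \<Longrightarrow> curvature_ratio s t x \<in> {m..M}"
  shows "m * Omega n t p q \<le> zeta n s q p \<and> zeta n s q p \<le> M * Omega n t p q"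
proof -
  define w where "w i = (p i + q i) / (2 * p i)" for i
  have "p i * (m * omega_gen t (w i)) \<le> p i * zeta_gen s (w i)"
    and "p i * zeta_gen s (w i) \<le> p i * (M * omega_gen t (w i))" if "i < n" for i
    using that assms(1,6) unfolding w_def
    by (auto simp: Gamma_def less_imp_le intro!: mult_left_mono
        omega_gen_le_zeta_gen[OF assms(3,4,5)] zeta_gen_le_omega_gen[OF assms(3,4,5)])
  then have "(\<Sum>i<n. p i * (m * omega_gen t (w i))) \<le> (\<Sum>i<n. p i * zeta_gen s (w i))"
    and "(\<Sum>i<n. p i * zeta_gen s (w i)) \<le> (\<Sum>i<n. p i * (M * omega_gen t (w i)))"
    by (auto intro!: sum_mono)
  then show ?thesis
    unfolding Omega_eq_sum_omega_gen[OF assms(1,2)] zeta_eq_sum_zeta_gen[OF assms(1,2)] w_def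
    by (simp add: sum_distrib_left algebra_simps)
qed

lemma Gamma_ratio_bounds:
  assumes "p \<in> Gamma n" "q \<in> Gamma n" "n > 0" "\<forall>i<n. r \<le> p i / q i \<and> p i / q i \<le> R"
  shows "r \<le> 1" and "1 \<le> R"
proof -
  obtain i j where ij: "i < n" "p i \<le> q i" "j < n" "q j \<le> p j"
    using Gamma_ex_le[OF assms(1-3)] Gamma_ex_le[OF assms(2,1,3)] by blast
  then have "0 < q i" "0 < q j" using assms(2) by (auto simp: Gamma_def)
  with ij have "p i / q i \<le> 1" "1 \<le> p j / q j" by auto
  with ij assms(4) show "r \<le> 1" "1 \<le> R" by force+
qed

lemma midpoint_ratio_bounds:
  fixes p q r R :: real
  assumes "0 < p" "0 < q" "0 < r" "r \<le> p / q" "p / q \<le> R"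
  shows "(p + q) / (2 * p) \<in> {(R + 1) / (2 * R) .. (r + 1) / (2 * r)}"
proof -
  have "0 < R" using assms(3-5) by linarith
  have "r * q \<le> p" "p \<le> R * q"
    using assms by (simp_all add: divide_simps)
  with \<open>0 < R\<close> assms(1,3) show ?thesis
    by (simp add: divide_simps algebra_simps)
qed

lemma curvature_ratio_midpoint:
  assumes "0 < r"
  shows "curvature_ratio s t ((r + 1) / (2 * r)) = ((r + 1) / (2 * r)) powr (s - t - 1) * (((4 - s) * r + s) / r)"
  using assms by (simp add: curvature_ratio_def field_simps)

theorem theorem4p1:
  fixes n :: nat and p q :: "nat \<Rightarrow> real" and r R s t :: real
  assumes "n \<ge> 2"
    and "p \<in> Gamma n" and "q \<in> Gamma n"
    and "0 < r" and "r \<le> R"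
    and "\<forall>i<n. r \<le> p i / q i \<and> p i / q i \<le> R"
    and "0 \<le> s" and "s \<le> 4"
  shows "(t \<ge> s \<and> t * (4 - s) \<ge> 6 * s - s^2 - 4 \<longrightarrow>
            ((r + 1) / (2 * r)) powr (s - t - 1) * (((4 - s) * r + s) / r) * Omega n t p q
              \<le> zeta n s q p \<and>
            zeta n s q p
              \<le> ((R + 1) / (2 * R)) powr (s - t - 1) * (((4 - s) * R + s) / R) * Omega n t p q)
       \<and> (t \<le> s \<and> t * (4 - s) \<le> 6 * s - s^2 - 4 \<longrightarrow>
            ((R + 1) / (2 * R)) powr (s - t - 1) * (((4 - s) * R + s) / R) * Omega n t p q
              \<le> zeta n s q p \<and>
            zeta n s q p
              \<le> ((r + 1) / (2 * r)) powr (s - t - 1) * (((4 - s) * r + s) / r) * Omega n t p q)"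
proof -
  have "r \<le> 1" "1 \<le> R"
    using Gamma_ratio_bounds[OF assms(2,3) _ assms(6)] assms(1) by simp_all
  define a b where "a = (R + 1) / (2 * R)" and "b = (r + 1) / (2 * r)"
  have "1/2 < a" "1 \<in> {a..b}"
    using assms(4) \<open>r \<le> 1\<close> \<open>1 \<le> R\<close> by (auto simp: a_def b_def divide_simps)
  have mid: "(p i + q i) / (2 * p i) \<in> {a..b}" if "i < n" for i
    unfolding a_def b_def using assms(2-4,6) that
    by (intro midpoint_ratio_bounds) (auto simp: Gamma_def)
  have "0 < a" using \<open>1/2 < a\<close> by simp
  have sandwich: "m * Omega n t p q \<le> zeta n s q p \<and> zeta n s q p \<le> M * Omega n t p q"
    if "\<And>x. x \<in> {a..b} \<Longrightarrow> curvature_ratio s t x \<in> {m..M}" for m M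
    using scaled_Omega_bounds_zeta[OF assms(2,3) \<open>0 < a\<close> \<open>1 \<in> {a..b}\<close> mid that] .
  have k_a: "curvature_ratio s t a = ((R + 1) / (2 * R)) powr (s - t - 1) * (((4 - s) * R + s) / R)"
   and k_b: "curvature_ratio s t b = ((r + 1) / (2 * r)) powr (s - t - 1) * (((4 - s) * r + s) / r)"
    using assms(4,5) by (simp_all add: a_def b_def curvature_ratio_midpoint)
  have "curvature_ratio s t x \<in> {curvature_ratio s t b .. curvature_ratio s t a}"
    if "s \<le> t" "6 * s - s^2 - 4 \<le> t * (4 - s)" "x \<in> {a..b}" for x
    using curvature_ratio_antimono[OF assms(7) that(1,2)] that(3) \<open>1/2 < a\<close> by auto
  moreover have "curvature_ratio s t x \<in> {curvature_ratio s t a .. curvature_ratio s t b}"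
    if "t \<le> s" "t * (4 - s) \<le> 6 * s - s^2 - 4" "x \<in> {a..b}" for x
    using curvature_ratio_mono[OF assms(7) that(1,2)] that(3) \<open>1/2 < a\<close> by auto
  ultimately show ?thesis
    using sandwich[of "curvature_ratio s t b" "curvature_ratio s t a"]
      sandwich[of "curvature_ratio s t a" "curvature_ratio s t b"]
    unfolding k_a k_b by blast
qed

end
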